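(* Let $a_1,\dots,a_n\in\mathbb{R}^d$ be the rows of $A$, let $k\ge1$ and $0<\epsilon<1$. Let $P$ be an $r$-dimensional linear subspace of $\mathbb{R}^d$ such that for all linear subspaces $W$ of dimension at most $k$, $$\sum_i\mathrm{dist}(a_i,P)-\sum_i\mathrm{dist}(a_i,P+W)\le\frac{\epsilon^2}{80}\mathrm{SubApx}_{k,1}(A).$$ Let $B\in\mathbb{R}^{d\times r}$ be an orthonormal basis for $P$ and set $\epsilon_c=\epsilon^2/6$. For each $i$ let $a_i^B\in\mathbb{R}^r$ satisfy $\mathrm{dist}(a_i,Ba_i^B)\le(1+\epsilon_c)\mathrm{dist}(a_i,P)$ and let $\mathrm{apx}_i$ satisfy $(1-\epsilon_c)\mathrm{dist}(a_i,P)\le\mathrm{apx}_i\le(1+\epsilon_c)\mathrm{dist}(a_i,P)$. Then for every shape $S$ lying in a $k$-dimensional subspace, $$\sum_i\sqrt{\mathrm{dist}(Ba_i^B,S)^2+\mathrm{apx}_i^2}=(1\pm5\epsilon)\sum_i\mathrm{dist}(a_i,S).$$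
   Context: $\mathrm{dist}(x,S)=\inf_{s\in S}\|x-s\|_2$. $\mathrm{SubApx}_{k,1}(A)=\min\{\sum_{i=1}^n\mathrm{dist}(a_i,Q): Q\text{ a linear subspace of }\mathbb{R}^d,\ \dim Q\le k\}$. $P+W$ is the span of $P\cup W$. A "shape lying in a $k$-dimensional subspace" is any nonempty set $S\subseteq\mathbb{R}^d$ contained in a linear subspace of dimension at most $k$. $x=(1\pm\epsilon)y$ means $(1-\epsilon)y\le x\le(1+\epsilon)y$. *)

theory Defs
  imports "HOL-Analysis.Analysis"
begin

definition SubApx :: "nat \<Rightarrow> (nat \<Rightarrow> 'a::euclidean_space) \<Rightarrow> nat \<Rightarrow> real" where
  "SubApx k a n = Inf {(\<Sum>i<n. infdist (a i) Q) | Q. subspace Q \<and> dim Q \<le> k}"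

definition shape_in_subspace :: "nat \<Rightarrow> 'a::euclidean_space set \<Rightarrow> bool" where
  "shape_in_subspace k S \<longleftrightarrow> S \<noteq> {} \<and> (\<exists>Q. subspace Q \<and> dim Q \<le> k \<and> S \<subseteq> Q)"

end

theory Submission
  imports Defs
begin

text \<open>Fix S inside a subspace Q of dimension at most k and put V = P + Q. For a row a with
  d = dist(a, P) and g = dist(a, V), let y be the orthogonal projection of a onto V; since
  S \<subseteq> V, Pythagoras gives dist(a, S) = sqrt(dist(y, S)^2 + g^2). The estimate
  sqrt(dist(B a^B, S)^2 + apx^2) therefore differs from dist(a, S) by at most
  |B a^B - y| + |apx - g|, and Pythagoras inside P \<subseteq> V together with AM-GM bounds this by
  2\<epsilon> d + 2(d - g)/\<epsilon>. Summing over the rows, the hypothesis on P with W = Q bounds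
  \<Sum>(d - g) by \<epsilon>^2/80 times \<Sum> dist(a, S), which also gives \<Sum> d \<le> 2 \<Sum> dist(a, S).\<close>

lemma subspace_orthogonal_decomp:
  fixes V :: "'a::euclidean_space set"
  assumes "subspace V"
  obtains y z where "y \<in> V" "\<And>v. v \<in> V \<Longrightarrow> orthogonal z v" "x = y + z"
  using orthogonal_subspace_decomp_exists[of V x] assms by (metis span_eq_iff)

lemma dist_orthogonal_offset_sq:
  fixes V :: "'a::euclidean_space set"
  assumes "subspace V" "y \<in> V" "s \<in> V" "\<And>v. v \<in> V \<Longrightarrow> orthogonal z v"
  shows "(dist (y + z) s)\<^sup>2 = (dist y s)\<^sup>2 + (norm z)\<^sup>2"
proof -
  have "orthogonal z (y - s)"
    using assms by (simp add: subspace_diff)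
  then have "(norm (z + (y - s)))\<^sup>2 = (norm z)\<^sup>2 + (norm (y - s))\<^sup>2"
    by (rule norm_add_Pythagorean)
  then show ?thesis
    by (simp add: dist_norm algebra_simps)
qed

lemma infdist_orthogonal_offset:
  fixes V S :: "'a::euclidean_space set"
  assumes V: "subspace V" and SV: "S \<subseteq> V" and "S \<noteq> {}"
    and y: "y \<in> V" and z: "\<And>v. v \<in> V \<Longrightarrow> orthogonal z v"
  shows "infdist (y + z) S = sqrt ((infdist y S)\<^sup>2 + (norm z)\<^sup>2)"
proof -
  have dist_eq: "dist (y + z) s = sqrt ((dist y s)\<^sup>2 + (norm z)\<^sup>2)" if "s \<in> V" for s
    using dist_orthogonal_offset_sq[OF V y that z] by (metis real_sqrt_abs abs_of_nonneg zero_le_dist)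
  show ?thesis
  proof (rule antisym)
    have "closure S \<subseteq> V"
      using SV V by (simp add: closed_subspace closure_minimal)
    moreover obtain s where "s \<in> closure S" "infdist y (closure S) = dist y s"
      using infdist_attains_inf[of "closure S" y] \<open>S \<noteq> {}\<close> by auto
    ultimately have "infdist (y + z) (closure S) \<le> sqrt ((infdist y (closure S))\<^sup>2 + (norm z)\<^sup>2)"
      using infdist_le[of s "closure S" "y + z"] dist_eq by auto
    then show "infdist (y + z) S \<le> sqrt ((infdist y S)\<^sup>2 + (norm z)\<^sup>2)"
      by (simp add: infdist_eq_setdist)
  next
    have "sqrt ((infdist y S)\<^sup>2 + (norm z)\<^sup>2) \<le> dist (y + z) s" if "s \<in> S" for s
    proof -
      have "(infdist y S)\<^sup>2 \<le> (dist y s)\<^sup>2"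
        using infdist_le[OF that, of y] infdist_nonneg by (intro power_mono)
      then show ?thesis
        using that SV dist_eq by auto
    qed
    then show "sqrt ((infdist y S)\<^sup>2 + (norm z)\<^sup>2) \<le> infdist (y + z) S"
      using \<open>S \<noteq> {}\<close> by (simp add: infdist_notempty cINF_greatest)
  qed
qed

lemma infdist_subspace_orthogonal:
  fixes V :: "'a::euclidean_space set"
  assumes "subspace V" "y \<in> V" "\<And>v. v \<in> V \<Longrightarrow> orthogonal z v"
  shows "infdist (y + z) V = norm z"
  using infdist_orthogonal_offset[OF assms(1) order_refl _ assms(2,3)] assms(2) by auto

lemma sqrt_sum_squares_diff_le:
  fixes x y x' y' :: real
  shows "\<bar>sqrt (x\<^sup>2 + y\<^sup>2) - sqrt (x'\<^sup>2 + y'\<^sup>2)\<bar> \<le> \<bar>x - x'\<bar> + \<bar>y - y'\<bar>"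
proof -
  have le: "sqrt (u\<^sup>2 + v\<^sup>2) \<le> sqrt (u'\<^sup>2 + v'\<^sup>2) + (\<bar>u - u'\<bar> + \<bar>v - v'\<bar>)" for u v u' v' :: real
    using real_sqrt_sum_squares_triangle_ineq[of u' "u - u'" v' "v - v'"]
      sqrt_sum_squares_le_sum_abs[of "u - u'" "v - v'"] by simp
  show ?thesis
    using le[of x y x' y'] le[of x' y' x y] by (simp add: abs_minus_commute abs_le_iff)
qed

lemma sqrt_infdist_perturbation_le:
  fixes P V S :: "'a::euclidean_space set"
  assumes P: "subspace P" and V: "subspace V" and PV: "P \<subseteq> V"
    and SV: "S \<subseteq> V" and S: "S \<noteq> {}" and b: "b \<in> P"
  shows "\<bar>sqrt ((infdist b S)\<^sup>2 + c\<^sup>2) - infdist a S\<bar>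
    \<le> sqrt ((dist a b)\<^sup>2 - (infdist a P)\<^sup>2) + sqrt ((infdist a P)\<^sup>2 - (infdist a V)\<^sup>2)
      + \<bar>c - infdist a V\<bar>"
proof -
  obtain p z where p: "p \<in> P" and z: "\<And>v. v \<in> P \<Longrightarrow> orthogonal z v" and apz: "a = p + z"
    using subspace_orthogonal_decomp[OF P, of a] by blast
  obtain y w where y: "y \<in> V" and w: "\<And>v. v \<in> V \<Longrightarrow> orthogonal w v" and ayw: "a = y + w"
    using subspace_orthogonal_decomp[OF V, of a] by blast
  have d: "infdist a P = norm z" "dist a p = norm z"
    using infdist_subspace_orthogonal[OF P p z] by (simp_all add: apz dist_norm)
  have g: "infdist a V = norm w"
    using infdist_subspace_orthogonal[OF V y w] by (simp add: ayw)
  have "(dist a b)\<^sup>2 = (dist p b)\<^sup>2 + (infdist a P)\<^sup>2"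
    using dist_orthogonal_offset_sq[OF P p b z] d(1) by (simp add: apz dist_norm)
  then have pb: "dist p b = sqrt ((dist a b)\<^sup>2 - (infdist a P)\<^sup>2)"
    by simp
  have "(infdist a P)\<^sup>2 = (dist y p)\<^sup>2 + (infdist a V)\<^sup>2"
    using dist_orthogonal_offset_sq[OF V y _ w, of p] p PV d by (auto simp: g ayw[symmetric])
  then have yp: "dist y p = sqrt ((infdist a P)\<^sup>2 - (infdist a V)\<^sup>2)"
    by simp
  have "\<bar>infdist b S - infdist y S\<bar> \<le> dist p b + dist y p"
    using infdist_triangle_abs[of b S y] dist_triangle[of b y p] by (simp add: dist_commute)
  moreover have "infdist a S = sqrt ((infdist y S)\<^sup>2 + (infdist a V)\<^sup>2)"
    using infdist_orthogonal_offset[OF V SV S y w] g by (simp add: ayw)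
  ultimately show ?thesis
    using sqrt_sum_squares_diff_le[of "infdist b S" c "infdist y S" "infdist a V"]
    by (simp add: pb yp)
qed

lemma sqrt_diff_squares_le_am_gm:
  fixes d g \<epsilon> :: real
  assumes "0 \<le> g" "g \<le> d" "0 < \<epsilon>"
  shows "sqrt (d\<^sup>2 - g\<^sup>2) \<le> \<epsilon> * d / 2 + (d - g) / \<epsilon>"
proof (rule real_le_lsqrt)
  show "0 \<le> \<epsilon> * d / 2 + (d - g) / \<epsilon>"
    using assms by simp
  have "(d - g) * (d + g) \<le> (d - g) * (2 * d)"
    using assms by (intro mult_left_mono) auto
  then have "d\<^sup>2 - g\<^sup>2 \<le> 2 * d * (d - g)"
    by (simp add: power2_eq_square algebra_simps)
  also have "\<dots> = (\<epsilon> * d / 2 + (d - g) / \<epsilon>)\<^sup>2 - (\<epsilon> * d / 2 - (d - g) / \<epsilon>)\<^sup>2"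
    using assms by (simp add: power2_eq_square field_simps)
  also have "\<dots> \<le> (\<epsilon> * d / 2 + (d - g) / \<epsilon>)\<^sup>2"
    by simp
  finally show "d\<^sup>2 - g\<^sup>2 \<le> (\<epsilon> * d / 2 + (d - g) / \<epsilon>)\<^sup>2" .
qed

lemma one_plus_sixth_square_le:
  fixes x :: real
  assumes "0 \<le> x" "x \<le> 1"
  shows "(1 + x / 6)\<^sup>2 \<le> 1 + x"
proof -
  have "(1 + x / 6)\<^sup>2 = 1 + x / 3 + x * x / 36"
    by (simp add: power2_eq_square field_simps)
  moreover have "x * x \<le> x"
    using assms mult_left_le[of x x] by simp
  ultimately show ?thesis
    using assms by linarith
qed

lemma sqrt_diff_squares_le_of_le_one_plus:
  fixes D d \<epsilon> :: real
  assumes "0 \<le> D" "D \<le> (1 + \<epsilon>\<^sup>2 / 6) * d" "0 < \<epsilon>" "\<epsilon> < 1"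
  shows "sqrt (D\<^sup>2 - d\<^sup>2) \<le> \<epsilon> * d"
proof (rule real_le_lsqrt)
  have "0 < 1 + \<epsilon>\<^sup>2 / 6"
    by (simp add: add_pos_nonneg)
  then have "0 \<le> d"
    using assms(1,2) zero_le_mult_iff[of "1 + \<epsilon>\<^sup>2 / 6" d] by linarith
  then show "0 \<le> \<epsilon> * d"
    using assms by simp
  have "D\<^sup>2 \<le> ((1 + \<epsilon>\<^sup>2 / 6) * d)\<^sup>2"
    using assms by (simp add: power_mono)
  also have "\<dots> = (1 + \<epsilon>\<^sup>2 / 6)\<^sup>2 * d\<^sup>2"
    by (simp add: power_mult_distrib)
  also have "\<dots> \<le> (1 + \<epsilon>\<^sup>2) * d\<^sup>2"
    using one_plus_sixth_square_le[of "\<epsilon>\<^sup>2"] assms by (simp add: mult_right_mono power_le_one)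
  finally show "D\<^sup>2 - d\<^sup>2 \<le> (\<epsilon> * d)\<^sup>2"
    by (simp add: power_mult_distrib algebra_simps)
qed

lemma infdist_approx_point_error:
  fixes P V S :: "'a::euclidean_space set"
  assumes P: "subspace P" and V: "subspace V" and PV: "P \<subseteq> V"
    and SV: "S \<subseteq> V" and S: "S \<noteq> {}" and b: "b \<in> P"
    and eps: "0 < \<epsilon>" "\<epsilon> < 1"
    and ab: "dist a b \<le> (1 + \<epsilon>\<^sup>2 / 6) * infdist a P"
    and c: "(1 - \<epsilon>\<^sup>2 / 6) * infdist a P \<le> c" "c \<le> (1 + \<epsilon>\<^sup>2 / 6) * infdist a P"
  shows "\<bar>sqrt ((infdist b S)\<^sup>2 + c\<^sup>2) - infdist a S\<bar>
    \<le> 2 * \<epsilon> * infdist a P + 2 * (infdist a P - infdist a V) / \<epsilon>"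
proof -
  define d g where "d = infdist a P" and "g = infdist a V"
  have "0 \<in> P"
    using P by (rule subspace_0)
  then have gd: "0 \<le> g" "g \<le> d"
    unfolding d_def g_def using PV by (auto intro: infdist_nonneg infdist_mono)
  have "sqrt ((dist a b)\<^sup>2 - d\<^sup>2) \<le> \<epsilon> * d"
    using sqrt_diff_squares_le_of_le_one_plus[OF zero_le_dist ab eps] by (simp add: d_def)
  moreover have "sqrt (d\<^sup>2 - g\<^sup>2) \<le> \<epsilon> * d / 2 + (d - g) / \<epsilon>"
    using sqrt_diff_squares_le_am_gm[OF gd eps(1)] .
  moreover have "\<bar>c - g\<bar> \<le> \<epsilon>\<^sup>2 / 6 * d + (d - g)"
    using c gd by (simp add: d_def algebra_simps abs_le_iff)
  moreover have "\<epsilon>\<^sup>2 / 6 * d \<le> \<epsilon> * d / 6"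
    using eps gd mult_left_le_one_le[of d \<epsilon>] by (simp add: power2_eq_square)
  moreover have "d - g \<le> (d - g) / \<epsilon>"
    using eps gd by (simp add: le_divide_eq mult_left_le)
  ultimately have "\<bar>sqrt ((infdist b S)\<^sup>2 + c\<^sup>2) - infdist a S\<bar> \<le> 2 * (\<epsilon> * d) + 2 * ((d - g) / \<epsilon>)"
    using sqrt_infdist_perturbation_le[OF P V PV SV S b, of c a] eps(1) gd
      mult_nonneg_nonneg[of \<epsilon> d]
    unfolding d_def[symmetric] g_def[symmetric] by linarith
  then show ?thesis
    by (simp add: d_def g_def)
qed

lemma sum_relative_error_le:
  fixes X Y d g :: "nat \<Rightarrow> real"
  assumes eps: "0 < \<epsilon>" "\<epsilon> < 1"
    and err: "\<And>i. i < n \<Longrightarrow> \<bar>X i - Y i\<bar> \<le> 2 * \<epsilon> * d i + 2 * (d i - g i) / \<epsilon>"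
    and g: "\<And>i. i < n \<Longrightarrow> 0 \<le> g i" "\<And>i. i < n \<Longrightarrow> g i \<le> Y i"
    and gain: "(\<Sum>i<n. d i) - (\<Sum>i<n. g i) \<le> \<epsilon>\<^sup>2 / 80 * (\<Sum>i<n. Y i)"
  shows "\<bar>(\<Sum>i<n. X i) - (\<Sum>i<n. Y i)\<bar> \<le> 5 * \<epsilon> * (\<Sum>i<n. Y i)"
proof -
  define D where "D = (\<Sum>i<n. Y i)"
  have gD: "0 \<le> (\<Sum>i<n. g i)" "(\<Sum>i<n. g i) \<le> D"
    unfolding D_def using g by (auto intro: sum_nonneg sum_mono)
  have "\<epsilon>\<^sup>2 / 80 \<le> 1"
    using eps power_le_one[of \<epsilon> 2] by simp
  then have "\<epsilon>\<^sup>2 / 80 * D \<le> D"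
    using gD by (intro mult_left_le_one_le) auto
  then have dD: "(\<Sum>i<n. d i) \<le> 2 * D"
    using gain gD unfolding D_def by linarith
  have "\<bar>(\<Sum>i<n. X i) - D\<bar> \<le> (\<Sum>i<n. \<bar>X i - Y i\<bar>)"
    unfolding D_def sum_subtractf[symmetric] by (rule sum_abs)
  also have "\<dots> \<le> (\<Sum>i<n. 2 * \<epsilon> * d i + 2 / \<epsilon> * (d i - g i))"
    using err by (intro sum_mono) simp
  also have "\<dots> = 2 * \<epsilon> * (\<Sum>i<n. d i) + 2 / \<epsilon> * ((\<Sum>i<n. d i) - (\<Sum>i<n. g i))"
    by (simp only: sum.distrib sum_subtractf flip: sum_distrib_left)
  also have "\<dots> \<le> 2 * \<epsilon> * (2 * D) + 2 / \<epsilon> * (\<epsilon>\<^sup>2 / 80 * D)"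
    using dD gain eps unfolding D_def by (intro add_mono mult_left_mono) auto
  also have "\<dots> \<le> 5 * \<epsilon> * D"
    using eps gD by (simp add: power2_eq_square field_simps)
  finally show ?thesis
    unfolding D_def .
qed

lemma SubApx_le_sum_infdist:
  fixes a :: "nat \<Rightarrow> 'a::euclidean_space"
  assumes "subspace Q" "dim Q \<le> k"
  shows "SubApx k a n \<le> (\<Sum>i<n. infdist (a i) Q)"
  unfolding SubApx_def
proof (rule cInf_lower)
  show "(\<Sum>i<n. infdist (a i) Q) \<in> {\<Sum>i<n. infdist (a i) Q |Q. subspace Q \<and> dim Q \<le> k}"
    using assms by blast
  show "bdd_below {\<Sum>i<n. infdist (a i) Q |Q. subspace Q \<and> dim Q \<le> k}"
    by (rule bdd_belowI[of _ 0]) (auto simp: sum_nonneg infdist_nonneg)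
qed

theorem theorem4:
  fixes a :: "nat \<Rightarrow> real^'d" and n k :: nat and \<epsilon> :: real
    and P :: "(real^'d) set" and B :: "real^'r^'d"
    and aB :: "nat \<Rightarrow> real^'r" and apx :: "nat \<Rightarrow> real"
  assumes k: "k \<ge> 1"
    and eps: "0 < \<epsilon>" "\<epsilon> < 1"
    and P: "subspace P" "dim P = CARD('r)"
    and good: "\<And>W. subspace W \<Longrightarrow> dim W \<le> k \<Longrightarrow>
        (\<Sum>i<n. infdist (a i) P) - (\<Sum>i<n. infdist (a i) (span (P \<union> W)))
          \<le> \<epsilon>\<^sup>2 / 80 * SubApx k a n"
    and B_orth: "transpose B ** B = mat 1"
    and B_span: "range (\<lambda>x. B *v x) = P"
    and aB: "\<And>i. i < n \<Longrightarrow> dist (a i) (B *v aB i) \<le> (1 + \<epsilon>\<^sup>2 / 6) * infdist (a i) P"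
    and apx: "\<And>i. i < n \<Longrightarrow> (1 - \<epsilon>\<^sup>2 / 6) * infdist (a i) P \<le> apx i"
             "\<And>i. i < n \<Longrightarrow> apx i \<le> (1 + \<epsilon>\<^sup>2 / 6) * infdist (a i) P"
  shows "\<forall>S. shape_in_subspace k S \<longrightarrow>
      (1 - 5 * \<epsilon>) * (\<Sum>i<n. infdist (a i) S)
        \<le> (\<Sum>i<n. sqrt ((infdist (B *v aB i) S)\<^sup>2 + (apx i)\<^sup>2)) \<and>
      (\<Sum>i<n. sqrt ((infdist (B *v aB i) S)\<^sup>2 + (apx i)\<^sup>2))
        \<le> (1 + 5 * \<epsilon>) * (\<Sum>i<n. infdist (a i) S)"
proof (intro allI impI)
  \<comment> \<open>Only P = range B enters.\<close>
  fix S :: "(real^'d) set"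
  assume "shape_in_subspace k S"
  then obtain Q where Q: "subspace Q" "dim Q \<le> k" "S \<subseteq> Q" and S: "S \<noteq> {}"
    unfolding shape_in_subspace_def by blast
  define V where "V = span (P \<union> Q)"
  have V: "subspace V" "P \<subseteq> V" "S \<subseteq> V"
    using Q(3) span_superset[of "P \<union> Q"] unfolding V_def by auto
  have "(\<Sum>i<n. infdist (a i) P) - (\<Sum>i<n. infdist (a i) V) \<le> \<epsilon>\<^sup>2 / 80 * SubApx k a n"
    unfolding V_def by (rule good[OF Q(1,2)])
  also have "\<dots> \<le> \<epsilon>\<^sup>2 / 80 * (\<Sum>i<n. infdist (a i) S)"
    using SubApx_le_sum_infdist[OF Q(1,2), of a n] sum_mono[of "{..<n}" "\<lambda>i. infdist (a i) Q"]
      infdist_mono[OF Q(3) S] by (intro mult_left_mono) (auto intro: order_trans)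
  finally have "\<bar>(\<Sum>i<n. sqrt ((infdist (B *v aB i) S)\<^sup>2 + (apx i)\<^sup>2)) - (\<Sum>i<n. infdist (a i) S)\<bar>
      \<le> 5 * \<epsilon> * (\<Sum>i<n. infdist (a i) S)"
    using infdist_approx_point_error[OF P(1) V S _ eps aB apx] B_span infdist_mono[OF V(3) S]
    by (intro sum_relative_error_le[OF eps]) (auto intro: infdist_nonneg)
  then show "(1 - 5 * \<epsilon>) * (\<Sum>i<n. infdist (a i) S)
        \<le> (\<Sum>i<n. sqrt ((infdist (B *v aB i) S)\<^sup>2 + (apx i)\<^sup>2)) \<and>
      (\<Sum>i<n. sqrt ((infdist (B *v aB i) S)\<^sup>2 + (apx i)\<^sup>2))
        \<le> (1 + 5 * \<epsilon>) * (\<Sum>i<n. infdist (a i) S)"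
    by (simp add: algebra_simps abs_le_iff)
qed

end
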